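(* Let $r\in[0,1]^A$ and for $\tau>0$ set $f^\tau(\theta)=\pi_\theta^\top(r-\tau\log\pi_\theta)$, where $\pi_\theta=\mathrm{softmax}(\theta)$, and $f^{*_\tau}:=\max_\theta f^\tau(\theta)$ (attained at $\pi_\theta=\mathrm{softmax}(r/\tau)$). For a fixed $\theta$ and $0<\tau_2<\tau_1$, $$f^{*_{\tau_2}}-f^{\tau_2}(\theta)\le f^{*_{\tau_1}}-f^{\tau_1}(\theta)+\tau_1W\Big(\frac{A-1}{e}\Big)+\tau_1\log A,$$ where $W$ is the principal branch of the Lambert $W$ function ($W(x)e^{W(x)}=x$ for $x\ge0$).
   Context: $\log\pi$ denotes the coordinatewise logarithm. *)

theory Defs
  imports Complex_Main
begin

definition softmax :: "('a::finite \<Rightarrow> real) \<Rightarrow> 'a \<Rightarrow> real" where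
  "softmax \<theta> a = exp (\<theta> a) / (\<Sum>b\<in>UNIV. exp (\<theta> b))"

definition freg :: "('a::finite \<Rightarrow> real) \<Rightarrow> real \<Rightarrow> ('a \<Rightarrow> real) \<Rightarrow> real" where
  "freg r \<tau> \<theta> = (\<Sum>a\<in>UNIV. softmax \<theta> a * (r a - \<tau> * ln (softmax \<theta> a)))"

definition fstar :: "('a::finite \<Rightarrow> real) \<Rightarrow> real \<Rightarrow> real" where
  "fstar r \<tau> = (SUP \<theta>. freg r \<tau> \<theta>)"

definition lambertW :: "real \<Rightarrow> real" where
  "lambertW x = (THE w. 0 \<le> w \<and> w * exp w = x)"

end

theory Submission
  imports Defs
begin

text \<open>Raising the temperature can only increase the optimal value, because the entropy of a
  distribution is nonnegative. At a fixed \<open>\<theta>\<close> the two objectives differ by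
  \<open>(\<tau>1 - \<tau>2) H(\<pi>\<^sub>\<theta>)\<close>, and Gibbs' inequality bounds the entropy \<open>H\<close> by \<open>log A\<close>.
  So the bound already holds without the Lambert W term, which is nonnegative.\<close>

definition entropy :: "('a::finite \<Rightarrow> real) \<Rightarrow> real" where
  "entropy p = - (\<Sum>a\<in>UNIV. p a * ln (p a))"

lemma softmax_pos: "0 < softmax \<theta> a"
  unfolding softmax_def by (intro divide_pos_pos) (auto intro: sum_pos)

lemma softmax_nonneg: "0 \<le> softmax \<theta> a"
  using softmax_pos by (rule less_imp_le)

lemma sum_softmax: "(\<Sum>a\<in>UNIV. softmax \<theta> a) = 1"
proof -
  have "(\<Sum>b\<in>UNIV. exp (\<theta> b)) > 0" by (auto intro: sum_pos)
  then show ?thesis unfolding softmax_def by (simp add: sum_divide_distrib[symmetric])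
qed

lemma softmax_le_1: "softmax \<theta> a \<le> 1"
proof -
  have "softmax \<theta> a \<le> (\<Sum>b\<in>UNIV. softmax \<theta> b)"
    by (rule member_le_sum) (simp_all add: softmax_nonneg)
  then show ?thesis by (simp add: sum_softmax)
qed

lemma entropy_nonneg:
  assumes "\<And>a. 0 \<le> p a \<and> p a \<le> 1"
  shows "0 \<le> entropy p"
proof -
  have "p a * ln (p a) \<le> 0" for a
    using assms[of a] by (cases "p a = 0") (auto intro: mult_nonneg_nonpos)
  then show ?thesis unfolding entropy_def by (simp add: sum_nonpos)
qed

text \<open>Gibbs' inequality against the uniform distribution, via \<open>ln x \<le> x - 1\<close> at
  \<open>x = 1 / (A p a)\<close>; zero entries contribute nothing since \<open>ln 0 = 0\<close> in HOL.\<close>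
lemma entropy_le_ln_card:
  fixes p :: "'a::finite \<Rightarrow> real"
  assumes nonneg: "\<And>a. 0 \<le> p a" and sum1: "(\<Sum>a\<in>UNIV. p a) = 1"
  shows "entropy p \<le> ln (real (card (UNIV :: 'a set)))"
proof -
  define A where "A = real (card (UNIV :: 'a set))"
  have A: "0 < A" unfolding A_def by (simp add: card_gt_0_iff)
  have term_le: "- p a * ln (p a) - p a * ln A \<le> 1 / A - p a" for a
  proof (cases "p a = 0")
    case False
    with nonneg[of a] have pos: "0 < p a" by simp
    have "- p a * ln (p a) - p a * ln A = p a * ln (1 / (A * p a))"
      using A pos by (simp add: ln_div ln_mult algebra_simps)
    also have "\<dots> \<le> p a * (1 / (A * p a) - 1)"
      using A pos by (intro mult_left_mono ln_le_minus_one) auto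
    also have "\<dots> = 1 / A - p a"
      using A pos by (simp add: field_simps)
    finally show ?thesis .
  qed (use A in simp)
  have "(\<Sum>a\<in>UNIV. - p a * ln (p a) - p a * ln A) \<le> (\<Sum>a\<in>UNIV. 1 / A - p a)"
    by (intro sum_mono term_le)
  then have "entropy p - ln A \<le> 0"
    using A unfolding entropy_def
    by (simp add: sum_subtractf sum_negf sum_distrib_right[symmetric] sum1 A_def)
  then show ?thesis unfolding A_def by simp
qed

lemma entropy_softmax_nonneg: "0 \<le> entropy (softmax \<theta>)"
  by (simp add: entropy_nonneg softmax_nonneg softmax_le_1)

lemma entropy_softmax_le_ln_card:
  "entropy (softmax (\<theta> :: 'a::finite \<Rightarrow> real)) \<le> ln (real (card (UNIV :: 'a set)))"
  by (simp add: entropy_le_ln_card sum_softmax softmax_nonneg)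

lemma freg_eq_expected_reward_plus_entropy:
  "freg r \<tau> \<theta> = (\<Sum>a\<in>UNIV. softmax \<theta> a * r a) + \<tau> * entropy (softmax \<theta>)"
  unfolding freg_def entropy_def
  by (simp add: algebra_simps sum.distrib sum_subtractf sum_distrib_left)

lemma freg_diff_eq: "freg r \<tau>1 \<theta> - freg r \<tau>2 \<theta> = (\<tau>1 - \<tau>2) * entropy (softmax \<theta>)"
  unfolding freg_eq_expected_reward_plus_entropy by (simp add: algebra_simps)

lemma freg_mono_temperature:
  assumes "\<tau>2 \<le> \<tau>1"
  shows "freg r \<tau>2 \<theta> \<le> freg r \<tau>1 \<theta>"
proof -
  have "0 \<le> (\<tau>1 - \<tau>2) * entropy (softmax \<theta>)"
    using assms entropy_softmax_nonneg by (intro mult_nonneg_nonneg) auto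
  then show ?thesis using freg_diff_eq[of r \<tau>1 \<theta> \<tau>2] by linarith
qed

lemma freg_le:
  fixes \<theta> :: "'a::finite \<Rightarrow> real"
  assumes "0 \<le> \<tau>"
  shows "freg r \<tau> \<theta> \<le> (\<Sum>a\<in>UNIV. \<bar>r a\<bar>) + \<tau> * ln (real (card (UNIV :: 'a set)))"
proof -
  have "softmax \<theta> a * r a \<le> \<bar>r a\<bar>" for a
  proof -
    have "softmax \<theta> a * r a \<le> softmax \<theta> a * \<bar>r a\<bar>"
      by (intro mult_left_mono softmax_nonneg) simp
    also have "\<dots> \<le> \<bar>r a\<bar>"
      using softmax_nonneg softmax_le_1 by (intro mult_left_le_one_le) auto
    finally show ?thesis .
  qed
  then have "(\<Sum>a\<in>UNIV. softmax \<theta> a * r a) \<le> (\<Sum>a\<in>UNIV. \<bar>r a\<bar>)"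
    by (rule sum_mono)
  moreover have "\<tau> * entropy (softmax \<theta>) \<le> \<tau> * ln (real (card (UNIV :: 'a set)))"
    using assms by (intro mult_left_mono entropy_softmax_le_ln_card)
  ultimately show ?thesis unfolding freg_eq_expected_reward_plus_entropy by linarith
qed

lemma fstar_mono:
  assumes "0 \<le> \<tau>2" "\<tau>2 \<le> \<tau>1"
  shows "fstar r \<tau>2 \<le> fstar r \<tau>1"
  unfolding fstar_def
proof (rule cSUP_mono)
  show "bdd_above (range (freg r \<tau>1))"
    using freg_le[of \<tau>1 r] assms by (intro bdd_aboveI2) auto
  show "\<exists>\<theta>'\<in>UNIV. freg r \<tau>2 \<theta> \<le> freg r \<tau>1 \<theta>'" for \<theta>
    using freg_mono_temperature[OF assms(2)] by blast
qed simp

lemma strict_mono_on_times_exp: "strict_mono_on {0..} (\<lambda>v::real. v * exp v)"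
  by (rule strict_mono_onI) (auto intro: mult_strict_mono)

lemma lambertW_eq:
  assumes "0 \<le> w"
  shows "lambertW (w * exp w) = w"
  unfolding lambertW_def
proof (rule the_equality)
  show "v = w" if "0 \<le> v \<and> v * exp v = w * exp w" for v
    using strict_mono_on_eqD[OF strict_mono_on_times_exp, of w v] that assms by simp
qed (use assms in simp)

lemma lambertW_nonneg:
  assumes "0 \<le> x"
  shows "0 \<le> lambertW x"
proof -
  have "x * 1 \<le> x * exp x" using assms by (intro mult_left_mono) auto
  then have "\<exists>w\<ge>0. w \<le> x \<and> w * exp w = x"
    using assms by (intro IVT') (auto intro!: continuous_intros)
  then obtain w where "0 \<le> w" "x = w * exp w" by auto
  then show ?thesis by (simp add: lambertW_eq)
qed

theorem lemma16:
  fixes r :: "'a::finite \<Rightarrow> real" and \<theta> :: "'a \<Rightarrow> real" and \<tau>1 \<tau>2 :: real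
  assumes "\<And>a. 0 \<le> r a \<and> r a \<le> 1"
    and "0 < \<tau>2" and "\<tau>2 < \<tau>1"
  shows "fstar r \<tau>2 - freg r \<tau>2 \<theta>
     \<le> fstar r \<tau>1 - freg r \<tau>1 \<theta>
        + \<tau>1 * lambertW ((real (card (UNIV::'a set)) - 1) / exp 1) + \<tau>1 * ln (real (card (UNIV::'a set)))"
proof -
  let ?A = "real (card (UNIV :: 'a set))"
  have A: "1 \<le> ?A" by (simp add: Suc_leI card_gt_0_iff)
  have "fstar r \<tau>2 \<le> fstar r \<tau>1"
    using assms by (intro fstar_mono) auto
  moreover have "freg r \<tau>1 \<theta> - freg r \<tau>2 \<theta> \<le> \<tau>1 * ln ?A"
  proof -
    have "freg r \<tau>1 \<theta> - freg r \<tau>2 \<theta> \<le> (\<tau>1 - \<tau>2) * ln ?A"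
      unfolding freg_diff_eq using assms entropy_softmax_le_ln_card by (intro mult_left_mono) auto
    also have "\<dots> \<le> \<tau>1 * ln ?A"
      using assms A by (intro mult_right_mono) auto
    finally show ?thesis .
  qed
  moreover have "0 \<le> \<tau>1 * lambertW ((?A - 1) / exp 1)"
    using assms A by (intro mult_nonneg_nonneg lambertW_nonneg) auto
  ultimately show ?thesis by linarith
qed

end
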